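(* Let $\mathbb L$ be a combinatorially indecomposable tropical Lagrangian multi-section of rank $r$ over a complete fan $\Sigma$ in $N_{\mathbb R}\cong\mathbb R^n$, with a $\mathbb C^\times$-local system $\mathcal L$ on $L\setminus L^{(n-2)}$. Then for any choice of the factors $\Theta_{\sigma_1\sigma_2}$ (for adjacent maximal cones $\sigma_1,\sigma_2$ with $\sigma_1\cap\sigma_2\not\subset S$), $\Theta_{\sigma_1\sigma_2}$ restricts to the identity on $U(\sigma_1\cap\sigma_2)\cap X^{(1)}_\Sigma$. In particular, if $\mathbb L$ is unobstructed with consistent $\Theta$, then $\mathcal E(\mathbb L,\mathcal L,\Theta)|_{X^{(1)}_\Sigma}=\mathcal E^{sf}(\mathbb L,\mathcal L)$.
   Context: $N$ lattice of rank $n$, $M=\mathrm{Hom}(N,\mathbb Z)$, $\Sigma(k)$ the $k$-dimensional cones, $\sigma^\vee$ dual cones, $U(\sigma)=\mathrm{Spec}\,\mathbb C[\sigma^\vee\cap M]$, $z^m$ monomials, $X_\Sigma$ the toric variety with torus $T=(\mathbb C^\times)^n$; for $\tau\in\Sigma$, $X_\tau$ is the closure of the torus orbit corresponding to $\tau$. $X^{(1)}_\Sigma=\bigcup_{\tau\in\Sigma(n-1)}X_\tau$, and $V(\sigma)=U(\sigma)\cap X^{(1)}_\Sigma$. $\mathbb L=(L,\Sigma_L,\mu,\pi,\varphi)$ is a tropical Lagrangian multi-section: a cone complex $L$ (finite union of closed rational polyhedral cones glued along faces), weights $\mu$, a branched covering $\pi$ onto $(N_{\mathbb R},\Sigma)$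 mapping cones homeomorphically onto cones with weighted fibre count $r$, and $\varphi$ continuous, integral linear on cones; $m(\sigma')\in M$ its slope on a maximal cone; $\sigma^{(1)},\dots,\sigma^{(r)}$ the lifts of $\sigma\in\Sigma(n)$ with multiplicity; $L^{(k)}$ the union of cones of dimension $\le k$; $S'$ the ramification locus (union of relative interiors of cones of weight $>1$), $S=\pi(S')$. Combinatorially indecomposable (not combinatorially equivalent to a combinatorial union of two connected ones) implies $(n-1)$-separability (distinct lifts of each $\tau\in\Sigma(n-1)$ carry distinct restrictions of $\varphi$) and $S'\subset L^{(n-2)}$; so for adjacent $\sigma_1,\sigma_2\in\Sigma(n)$ each lift $\sigma_1^{(\alpha)}$ determines a unique lift $\sigma_2^{(\beta)}$ with $\sigma_1^{(\alpha)}\cap\sigma_2^{(\beta)}$ of dimension $n-1$. A $\mathbb C^\times$-local system on $L\setminus L^{(n-2)}$ is represented by constants $g^{sf}_{\sigma_1^{(\alpha)}\sigma_2^{(\beta)}}\in\mathbb C^\times$ on such adjacent pairs. $\mathcal E_\sigma$: trivial rank $r$ bundle on $U(\sigma)$ with frame $1(\sigma^{(\alpha)})$ of torus weight $m(\sigma^{(\alpha)})$. $G^{sf}_{\sigma_1\sigma_2}:1(\sigma_1^{(\alpha)})\mapsto g^{sf}_{\sigma_1^{(\alpha)}\sigma_2^{(\beta)}}z^{m(\sigma_1^{(\alpha)})-m(\sigma_2^{(\beta)})}1(\sigma_2^{(\beta)})$ on $V(\sigma_1\cap\sigma_2)$. The semi-flat bundle $\mathcal E^{sf}(\mathbb L,\mathcal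 L)$ on $X^{(1)}_\Sigma$ is obtained by gluing the $\mathcal E_\sigma|_{V(\sigma)}$ via the $G^{sf}$. For $\tau=\sigma_1\cap\sigma_2\in\Sigma(n-1)$ and a cone $\omega'$ of $L$, $N_\tau(\omega')$ is the endomorphism of $\mathcal E_{\sigma_1}|_{U(\tau)}$ with $(\alpha,\beta)$-entry $n^{(\alpha\beta)}_\tau(\omega')z^{m(\sigma_1^{(\alpha)})-m(\sigma_1^{(\beta)})}$ ($n$'s arbitrary complex constants) if $\omega'\subset\sigma_1^{(\alpha)}\cap\sigma_1^{(\beta)}$, $\alpha\ne\beta$, $m(\sigma_1^{(\alpha)})-m(\sigma_1^{(\beta)})\in\tau^\vee\cap M$, and $0$ otherwise; $S'_\tau=\{\sigma_1^{(\alpha)}\cap\sigma_1^{(\beta)}:m(\sigma_1^{(\alpha)})-m(\sigma_1^{(\beta)})\in\tau^\vee\cap M\}$; $\Theta_{\sigma_1\sigma_2}=\Theta_\tau=\prod_{\omega'\in S'_\tau}\exp N_\tau(\omega')$; $G_{\sigma_1\sigma_2}=G^{sf}_{\sigma_1\sigma_2}\circ\Theta_{\sigma_1\sigma_2}$ on $U(\tau)$. $\Theta$ (the collection) is consistent if for every $\omega\in\Sigma$ and every cycle of maximal cones containing $\omega$ with consecutive ones sharing an $(n-1)$-cone, the composition of the $G$'s restricted to $U(\omega)$ is the identity. $\mathbb L$ is unobstructed if such $\mathcal L$ and consistent $\Theta$ exist; then composing $G$'s along chains of adjacent maximal cones containing $\sigma_1\cap\sigma_2$ defines a cocycle $G_{\sigma_1\sigma_2}$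 on $U(\sigma_1\cap\sigma_2)$ for all $\sigma_1,\sigma_2\in\Sigma(n)$, and $\mathcal E(\mathbb L,\mathcal L,\Theta)$ is the resulting toric vector bundle on $X_\Sigma$. *)

theory Defs
  imports "HOL-Analysis.Analysis"
begin

text \<open>N = Z^n is modelled by int^'n (inside real^'n), M = Hom(N,Z) by int^'n with the
standard pairing.\<close>

definition pair :: "int^'n \<Rightarrow> real^'n \<Rightarrow> real" where
  "pair m v = (\<Sum>i\<in>UNIV. real_of_int (m$i) * v$i)"

definition lattice_pts :: "(real^'n) set" where
  "lattice_pts = {v. \<forall>i. v$i \<in> \<int>}"

definition rat_poly_cone :: "(real^'n) set \<Rightarrow> bool" where
  "rat_poly_cone C \<longleftrightarrow> (\<exists>V. finite V \<and> V \<subseteq> lattice_pts \<and>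
      C = {x. \<exists>c. (\<forall>v\<in>V. c v \<ge> 0) \<and> x = (\<Sum>v\<in>V. c v *\<^sub>R v)})"

definition strongly_convex :: "(real^'n) set \<Rightarrow> bool" where
  "strongly_convex C \<longleftrightarrow> C \<inter> uminus ` C = {0}"

definition fan :: "(real^'n) set set \<Rightarrow> bool" where
  "fan Sig \<longleftrightarrow> finite Sig \<and> (\<forall>\<sigma>\<in>Sig. rat_poly_cone \<sigma> \<and> strongly_convex \<sigma>) \<and>
     (\<forall>\<sigma>\<in>Sig. \<forall>f. f face_of \<sigma> \<and> f \<noteq> {} \<longrightarrow> f \<in> Sig) \<and>
     (\<forall>\<sigma>1\<in>Sig. \<forall>\<sigma>2\<in>Sig. (\<sigma>1 \<inter> \<sigma>2) face_of \<sigma>1 \<and> (\<sigma>1 \<inter> \<sigma>2) face_of \<sigma>2)"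

definition complete_fan :: "(real^'n) set set \<Rightarrow> bool" where
  "complete_fan Sig \<longleftrightarrow> fan Sig \<and> \<Union>Sig = UNIV"

definition cones_dim :: "(real^'n) set set \<Rightarrow> int \<Rightarrow> (real^'n) set set" where
  "cones_dim Sig k = {\<sigma>\<in>Sig. aff_dim \<sigma> = k}"

definition dual_lat :: "(real^'n) set \<Rightarrow> (int^'n) set" where
  "dual_lat \<sigma> = {m. \<forall>v\<in>\<sigma>. pair m v \<ge> 0}"

definition perp_lat :: "(real^'n) set \<Rightarrow> (int^'n) set" where
  "perp_lat \<sigma> = {m. \<forall>v\<in>\<sigma>. pair m v = 0}"

text \<open>C-points of U(sigma) = Spec C[sigma-dual \<inter> M] are monoid homomorphisms
 (sigma-dual \<inter> M, +) \<rightarrow> (C, *); the monomial z^m evaluated at x is x m.\<close>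
definition U_pts :: "(real^'n) set \<Rightarrow> (int^'n \<Rightarrow> complex) set" where
  "U_pts \<sigma> = {x. x 0 = 1 \<and> (\<forall>a\<in>dual_lat \<sigma>. \<forall>b\<in>dual_lat \<sigma>. x (a + b) = x a * x b)}"

text \<open>A point x of U(sigma) lies in the torus orbit O(rho) (rho a face of sigma) iff
 x(m) \<noteq> 0 exactly for m in rho-perp. X^(1) is the union of the closures of the orbits of
 the (n-1)-cones, i.e. the union of the orbits O(rho) with dim rho \<ge> n-1.
 V(sigma) = U(sigma) \<inter> X^(1).\<close>
definition V_pts :: "(real^'n) set set \<Rightarrow> (real^'n) set \<Rightarrow> (int^'n \<Rightarrow> complex) set" where
  "V_pts Sig \<sigma> = {x \<in> U_pts \<sigma>. \<exists>\<rho>\<in>Sig. \<rho> face_of \<sigma> \<and> aff_dim \<rho> \<ge> int CARD('n) - 1 \<and>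
       (\<forall>a\<in>dual_lat \<sigma>. x a \<noteq> 0 \<longleftrightarrow> a \<in> perp_lat \<rho>)}"

text \<open>The cone complex L is given by its finite set of cones Lc, the face relation F
 (F d c: d is a face of c), the projection P c = pi(c) (a cone of Sigma, pi maps c
 homeomorphically onto it, and the faces of c correspond bijectively to the faces of P c),
 weights mu, and for every cone c a slope m c in M with phi restricted to c equal to
 pair (m c) on P c (continuity: compatible on faces). Weighted fibre count r, and
 the branched-covering condition: locally over each cone the weights add up.\<close>
definition trop_lag_multisection ::
  "(real^'n) set set \<Rightarrow> 'c set \<Rightarrow> ('c \<Rightarrow> 'c \<Rightarrow> bool) \<Rightarrow> ('c \<Rightarrow> (real^'n) set)
    \<Rightarrow> ('c \<Rightarrow> nat) \<Rightarrow> ('c \<Rightarrow> int^'n) \<Rightarrow> nat \<Rightarrow> bool" where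
  "trop_lag_multisection Sig Lc F P mu m r \<longleftrightarrow>
     finite Lc \<and> P ` Lc \<subseteq> Sig \<and>
     (\<forall>c d. F d c \<longrightarrow> c \<in> Lc \<and> d \<in> Lc) \<and>
     (\<forall>c\<in>Lc. F c c) \<and> (\<forall>a b c. F a b \<and> F b c \<longrightarrow> F a c) \<and> (\<forall>a b. F a b \<and> F b a \<longrightarrow> a = b) \<and>
     (\<forall>c d. F d c \<longrightarrow> P d face_of P c) \<and>
     (\<forall>c\<in>Lc. \<forall>f. f face_of P c \<and> f \<noteq> {} \<longrightarrow> (\<exists>!d. F d c \<and> P d = f)) \<and>
     (\<forall>c\<in>Lc. mu c > 0) \<and>
     (\<forall>c d. F d c \<longrightarrow> (\<forall>v\<in>P d. pair (m d) v = pair (m c) v)) \<and>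
     (\<forall>\<sigma>\<in>Sig. (\<Sum>c\<in>{c\<in>Lc. P c = \<sigma>}. mu c) = r) \<and>
     (\<forall>d\<in>Lc. \<forall>\<sigma>\<in>Sig. P d face_of \<sigma> \<longrightarrow> mu d = (\<Sum>c\<in>{c\<in>Lc. F d c \<and> P c = \<sigma>}. mu c))"

definition S_set :: "'c set \<Rightarrow> ('c \<Rightarrow> (real^'n) set) \<Rightarrow> ('c \<Rightarrow> nat) \<Rightarrow> (real^'n) set" where
  "S_set Lc P mu = \<Union>{rel_interior (P c) |c. c \<in> Lc \<and> mu c > 1}"

definition separable_n1 :: "(real^'n) set set \<Rightarrow> 'c set \<Rightarrow> ('c \<Rightarrow> (real^'n) set) \<Rightarrow> ('c \<Rightarrow> int^'n) \<Rightarrow> bool" where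
  "separable_n1 Sig Lc P m \<longleftrightarrow> (\<forall>\<tau>\<in>cones_dim Sig (int CARD('n) - 1). \<forall>d1\<in>Lc. \<forall>d2\<in>Lc.
      P d1 = \<tau> \<and> P d2 = \<tau> \<and> d1 \<noteq> d2 \<longrightarrow> (\<exists>v\<in>\<tau>. pair (m d1) v \<noteq> pair (m d2) v))"

definition ramification_codim2 :: "'c set \<Rightarrow> ('c \<Rightarrow> (real^'n) set) \<Rightarrow> ('c \<Rightarrow> nat) \<Rightarrow> bool" where
  "ramification_codim2 Lc P mu \<longleftrightarrow> (\<forall>c\<in>Lc. mu c > 1 \<longrightarrow> aff_dim (P c) \<le> int CARD('n) - 2)"

text \<open>A labelling sigma^(0),...,sigma^(r-1) of the lifts of sigma, with multiplicity.\<close>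
definition lifts_of :: "'c set \<Rightarrow> ('c \<Rightarrow> (real^'n) set) \<Rightarrow> ('c \<Rightarrow> nat) \<Rightarrow> nat \<Rightarrow> (real^'n) set \<Rightarrow> (nat \<Rightarrow> 'c) \<Rightarrow> bool" where
  "lifts_of Lc P mu r \<sigma> l \<longleftrightarrow> (\<forall>\<alpha><r. l \<alpha> \<in> Lc \<and> P (l \<alpha>) = \<sigma>) \<and>
      (\<forall>c\<in>Lc. P c = \<sigma> \<longrightarrow> card {\<alpha>. \<alpha> < r \<and> l \<alpha> = c} = mu c)"

section \<open>r x r complex matrices (as functions, indices < r)\<close>

definition mmul :: "nat \<Rightarrow> (nat \<Rightarrow> nat \<Rightarrow> complex) \<Rightarrow> (nat \<Rightarrow> nat \<Rightarrow> complex) \<Rightarrow> nat \<Rightarrow> nat \<Rightarrow> complex" where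
  "mmul r A B = (\<lambda>i j. \<Sum>k<r. A i k * B k j)"

definition mid :: "nat \<Rightarrow> nat \<Rightarrow> complex" where
  "mid = (\<lambda>i j. if i = j then 1 else 0)"

definition mpow :: "nat \<Rightarrow> (nat \<Rightarrow> nat \<Rightarrow> complex) \<Rightarrow> nat \<Rightarrow> nat \<Rightarrow> nat \<Rightarrow> complex" where
  "mpow r A k = ((mmul r A) ^^ k) mid"

definition mexp :: "nat \<Rightarrow> (nat \<Rightarrow> nat \<Rightarrow> complex) \<Rightarrow> nat \<Rightarrow> nat \<Rightarrow> complex" where
  "mexp r A = (\<lambda>i j. \<Sum>k. mpow r A k i j / of_nat (fact k))"

text \<open>N_tau(omega') evaluated at a point x, in the frame 1(sigma1^(alpha)); l = lifts of sigma1.\<close>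
definition Nmat :: "('c \<Rightarrow> 'c \<Rightarrow> bool) \<Rightarrow> ('c \<Rightarrow> int^'n) \<Rightarrow> (nat \<Rightarrow> 'c) \<Rightarrow> (real^'n) set
     \<Rightarrow> (nat \<Rightarrow> nat \<Rightarrow> complex) \<Rightarrow> 'c \<Rightarrow> (int^'n \<Rightarrow> complex) \<Rightarrow> nat \<Rightarrow> nat \<Rightarrow> complex" where
  "Nmat F m l \<tau> nn \<omega> x = (\<lambda>\<alpha> \<beta>.
     if F \<omega> (l \<alpha>) \<and> F \<omega> (l \<beta>) \<and> \<alpha> \<noteq> \<beta> \<and> m (l \<alpha>) - m (l \<beta>) \<in> dual_lat \<tau>
     then nn \<alpha> \<beta> * x (m (l \<alpha>) - m (l \<beta>)) else 0)"

text \<open>S'_tau: the cones omega' of L that are intersections sigma1^(alpha) \<inter> sigma1^(beta)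
 with m(sigma1^(alpha)) - m(sigma1^(beta)) in tau-dual \<inter> M.\<close>
definition Sprime_tau :: "('c \<Rightarrow> 'c \<Rightarrow> bool) \<Rightarrow> ('c \<Rightarrow> int^'n) \<Rightarrow> nat \<Rightarrow> (nat \<Rightarrow> 'c) \<Rightarrow> (real^'n) set \<Rightarrow> 'c set" where
  "Sprime_tau F m r l \<tau> = {\<omega>. \<exists>\<alpha><r. \<exists>\<beta><r. m (l \<alpha>) - m (l \<beta>) \<in> dual_lat \<tau> \<and>
       (\<forall>d. (F d (l \<alpha>) \<and> F d (l \<beta>)) \<longleftrightarrow> F d \<omega>)}"

definition Theta :: "nat \<Rightarrow> ('c \<Rightarrow> 'c \<Rightarrow> bool) \<Rightarrow> ('c \<Rightarrow> int^'n) \<Rightarrow> (nat \<Rightarrow> 'c) \<Rightarrow> (real^'n) set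
     \<Rightarrow> ('c \<Rightarrow> nat \<Rightarrow> nat \<Rightarrow> complex) \<Rightarrow> 'c list \<Rightarrow> (int^'n \<Rightarrow> complex) \<Rightarrow> nat \<Rightarrow> nat \<Rightarrow> complex" where
  "Theta r F m l \<tau> nn ws x = foldr (mmul r) (map (\<lambda>\<omega>. mexp r (Nmat F m l \<tau> (nn \<omega>) \<omega> x)) ws) mid"

text \<open>Semi-flat transition G^sf_{sigma1 sigma2} at x, as the matrix whose (beta,alpha) entry is
 the coefficient of 1(sigma2^(beta)) in the image of 1(sigma1^(alpha)); l1, l2 lifts of
 sigma1, sigma2, g the local system constants.\<close>
definition Gsf :: "('c \<Rightarrow> 'c \<Rightarrow> bool) \<Rightarrow> ('c \<Rightarrow> (real^'n) set) \<Rightarrow> ('c \<Rightarrow> int^'n) \<Rightarrow> ('c \<Rightarrow> 'c \<Rightarrow> complex)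
     \<Rightarrow> (nat \<Rightarrow> 'c) \<Rightarrow> (nat \<Rightarrow> 'c) \<Rightarrow> (int^'n \<Rightarrow> complex) \<Rightarrow> nat \<Rightarrow> nat \<Rightarrow> complex" where
  "Gsf F P m g l1 l2 x = (\<lambda>\<beta> \<alpha>.
     if (\<exists>d. F d (l1 \<alpha>) \<and> F d (l2 \<beta>) \<and> aff_dim (P d) = int CARD('n) - 1)
     then g (l1 \<alpha>) (l2 \<beta>) * x (m (l1 \<alpha>) - m (l2 \<beta>)) else 0)"

end

theory Submission imports Defs begin

text \<open>Write \<open>\<tau> = \<sigma>1 \<inter> \<sigma>2\<close>. A point of \<open>V(\<tau>)\<close> lies in the torus orbit of \<open>\<tau>\<close>, so a
monomial \<open>z\<^sup>a\<close> with \<open>a\<close> in the dual cone of \<open>\<tau>\<close> vanishes there unless \<open>a\<close> is orthogonal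
to \<open>\<tau>\<close>. Since the ramification locus has codimension two, the lifts of \<open>\<sigma>1\<close> have weight one
and two distinct lifts cannot share their facet over \<open>\<tau>\<close>; by \<open>(n-1)\<close>-separability these
facets carry distinct slopes. Hence the difference of the slopes of two lifts of \<open>\<sigma>1\<close> is never
orthogonal to \<open>\<tau>\<close>, every entry of every \<open>N\<^sub>\<tau>(\<omega>')\<close> vanishes on \<open>V(\<tau>)\<close>, and \<open>\<Theta>\<^sub>\<tau>\<close>
is a product of exponentials of the zero matrix.\<close>

lemma mmul_right_mid:
  assumes "\<forall>i<r. \<forall>j<r. B i j = mid i j" and "i < r" and "j < r"
  shows "mmul r A B i j = A i j"
proof -
  have "mmul r A B i j = (\<Sum>k<r. if k = j then A i j else 0)"
    unfolding mmul_def by (rule sum.cong) (use assms in \<open>auto simp: mid_def\<close>)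
  then show ?thesis using assms(3) by simp
qed

lemma foldr_mmul_mid:
  assumes "\<forall>A\<in>set As. \<forall>i<r. \<forall>j<r. A i j = mid i j"
  shows "\<forall>i<r. \<forall>j<r. foldr (mmul r) As mid i j = mid i j"
  using assms by (induction As) (auto simp: mmul_right_mid)

lemma mpow_Suc_zero:
  assumes "\<forall>i<r. \<forall>j<r. A i j = 0" and "i < r"
  shows "mpow r A (Suc k) i j = 0"
  using assms unfolding mpow_def mmul_def by simp

lemma mexp_zero:
  assumes "\<forall>i<r. \<forall>j<r. A i j = 0" and "i < r"
  shows "mexp r A i j = mid i j"
proof -
  have "(\<lambda>k. mpow r A k i j / of_nat (fact k)) = (\<lambda>k. if k = 0 then mid i j else 0)"
    using mpow_Suc_zero[OF assms] by (auto simp: mpow_def fun_eq_iff gr0_conv_Suc)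
  moreover have "(\<lambda>k::nat. if k = 0 then mid i j else 0) sums mid i j"
    using sums_single[of 0 "\<lambda>_. mid i j"] by simp
  ultimately show ?thesis
    unfolding mexp_def by (simp add: sums_unique[symmetric])
qed

lemma pair_diff: "pair (a - b) v = pair a v - pair b v"
  unfolding pair_def by (simp add: algebra_simps sum_subtractf)

lemma V_pts_nonzero_iff_perp:
  assumes "convex \<tau>" and "aff_dim \<tau> \<le> int CARD('n) - 1"
    and "x \<in> V_pts Sig (\<tau> :: (real^'n) set)" and "a \<in> dual_lat \<tau>"
  shows "x a \<noteq> 0 \<longleftrightarrow> a \<in> perp_lat \<tau>"
proof -
  obtain \<rho> where \<rho>: "\<rho> face_of \<tau>" "aff_dim \<rho> \<ge> int CARD('n) - 1"
    and nonzero: "\<forall>a\<in>dual_lat \<tau>. x a \<noteq> 0 \<longleftrightarrow> a \<in> perp_lat \<rho>"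
    using assms(3) unfolding V_pts_def by blast
  have "\<rho> = \<tau>"
    using face_of_aff_dim_lt[OF assms(1) \<rho>(1)] \<rho>(2) assms(2) by fastforce
  then show ?thesis using nonzero assms(4) by blast
qed

lemma
  assumes "trop_lag_multisection Sig Lc F P mu m r"
  shows trop_lag_finite: "finite Lc"
    and trop_lag_face_mem: "F d c \<Longrightarrow> c \<in> Lc \<and> d \<in> Lc"
    and trop_lag_face_proj: "F d c \<Longrightarrow> P d face_of P c"
    and trop_lag_lift_face: "c \<in> Lc \<Longrightarrow> f face_of P c \<Longrightarrow> f \<noteq> {} \<Longrightarrow> \<exists>d. F d c \<and> P d = f"
    and trop_lag_weight_pos: "c \<in> Lc \<Longrightarrow> mu c > 0"
    and trop_lag_slope_face: "F d c \<Longrightarrow> v \<in> P d \<Longrightarrow> pair (m d) v = pair (m c) v"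
    and trop_lag_weight_sum: "d \<in> Lc \<Longrightarrow> \<sigma> \<in> Sig \<Longrightarrow> P d face_of \<sigma> \<Longrightarrow>
           mu d = (\<Sum>c\<in>{c\<in>Lc. F d c \<and> P c = \<sigma>}. mu c)"
proof -
  have fin: "finite Lc"
    and faces: "\<forall>c d. F d c \<longrightarrow> c \<in> Lc \<and> d \<in> Lc"
    and face_proj: "\<forall>c d. F d c \<longrightarrow> P d face_of P c"
    and face_lift: "\<forall>c\<in>Lc. \<forall>f. f face_of P c \<and> f \<noteq> {} \<longrightarrow> (\<exists>!d. F d c \<and> P d = f)"
    and pos: "\<forall>c\<in>Lc. mu c > 0"
    and slope: "\<forall>c d. F d c \<longrightarrow> (\<forall>v\<in>P d. pair (m d) v = pair (m c) v)"
    and weight: "\<forall>d\<in>Lc. \<forall>\<sigma>\<in>Sig. P d face_of \<sigma> \<longrightarrow>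
                   mu d = (\<Sum>c\<in>{c\<in>Lc. F d c \<and> P c = \<sigma>}. mu c)"
    using assms unfolding trop_lag_multisection_def by - (elim conjE; assumption)+
  show "finite Lc" by (fact fin)
  show "F d c \<Longrightarrow> c \<in> Lc \<and> d \<in> Lc" using faces by blast
  show "F d c \<Longrightarrow> P d face_of P c" using face_proj by blast
  show "c \<in> Lc \<Longrightarrow> f face_of P c \<Longrightarrow> f \<noteq> {} \<Longrightarrow> \<exists>d. F d c \<and> P d = f"
    using face_lift by blast
  show "c \<in> Lc \<Longrightarrow> mu c > 0" using pos by blast
  show "F d c \<Longrightarrow> v \<in> P d \<Longrightarrow> pair (m d) v = pair (m c) v" using slope by blast
  show "d \<in> Lc \<Longrightarrow> \<sigma> \<in> Sig \<Longrightarrow> P d face_of \<sigma> \<Longrightarrow>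
          mu d = (\<Sum>c\<in>{c\<in>Lc. F d c \<and> P c = \<sigma>}. mu c)"
    using weight by blast
qed

lemma trop_lag_shared_face_weight:
  assumes tl: "trop_lag_multisection Sig Lc F P mu m r"
    and "F d c1" and "F d c2" and "c1 \<noteq> c2"
    and "P c1 = \<sigma>" and "P c2 = \<sigma>" and "\<sigma> \<in> Sig"
  shows "mu d \<ge> 2"
proof -
  have mem: "c1 \<in> Lc" "c2 \<in> Lc" "d \<in> Lc"
    using trop_lag_face_mem[OF tl] assms(2,3) by blast+
  have "mu d = (\<Sum>c\<in>{c\<in>Lc. F d c \<and> P c = \<sigma>}. mu c)"
    using trop_lag_face_proj[OF tl assms(2)] mem(3) assms(5,7)
    by (intro trop_lag_weight_sum[OF tl]) simp_all
  also have "\<dots> \<ge> (\<Sum>c\<in>{c1, c2}. mu c)"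
    using trop_lag_finite[OF tl] mem assms(2-6) by (intro sum_mono2) auto
  finally have "mu d \<ge> mu c1 + mu c2"
    using assms(4) by simp
  moreover have "mu c1 > 0" "mu c2 > 0"
    using trop_lag_weight_pos[OF tl] mem by blast+
  ultimately show ?thesis by linarith
qed

lemma ramification_codim2_weight_le1:
  fixes P :: "'c \<Rightarrow> (real^'n) set"
  assumes "ramification_codim2 Lc P mu" and "c \<in> Lc"
    and "aff_dim (P c) > int CARD('n) - 2"
  shows "mu c \<le> 1"
  using assms unfolding ramification_codim2_def by force

lemma lifts_of_inj_on:
  assumes "lifts_of Lc P mu r \<sigma> l" and "\<forall>\<alpha><r. mu (l \<alpha>) \<le> 1"
  shows "inj_on l {..<r}"
proof
  fix \<alpha> \<beta> assume "\<alpha> \<in> {..<r}" "\<beta> \<in> {..<r}" "l \<alpha> = l \<beta>"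
  then have "card {\<alpha>, \<beta>} \<le> card {\<gamma>. \<gamma> < r \<and> l \<gamma> = l \<alpha>}"
    by (intro card_mono) auto
  also have "\<dots> \<le> 1"
    using assms \<open>\<alpha> \<in> {..<r}\<close> unfolding lifts_of_def by auto
  finally have "card {\<alpha>, \<beta>} \<le> 1" .
  then show "\<alpha> = \<beta>" by (cases "\<alpha> = \<beta>") auto
qed

lemma slope_diff_not_perp_facet:
  fixes Sig :: "(real^'n) set set"
  assumes tl: "trop_lag_multisection Sig Lc F P mu m r"
    and sep: "separable_n1 Sig Lc P m" and ram: "ramification_codim2 Lc P mu"
    and \<tau>: "\<tau> \<in> cones_dim Sig (int CARD('n) - 1)" "\<tau> face_of \<sigma>" and "\<sigma> \<in> Sig"
    and c: "c1 \<in> Lc" "c2 \<in> Lc" "P c1 = \<sigma>" "P c2 = \<sigma>" "c1 \<noteq> c2"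
  shows "m c1 - m c2 \<notin> perp_lat \<tau>"
proof -
  have dim: "aff_dim \<tau> = int CARD('n) - 1"
    using \<tau>(1) unfolding cones_dim_def by auto
  have "\<tau> \<noteq> {}"
  proof
    assume "\<tau> = {}"
    with dim have "CARD('n) = 0" by simp
    then show False by simp
  qed
  have lift_face: "\<exists>d. F d c \<and> P d = \<tau>" if "c \<in> Lc" "P c = \<sigma>" for c
    using trop_lag_lift_face[OF tl] that \<tau>(2) \<open>\<tau> \<noteq> {}\<close> by metis
  obtain d1 where d1: "F d1 c1" "P d1 = \<tau>"
    using lift_face c(1,3) by blast
  obtain d2 where d2: "F d2 c2" "P d2 = \<tau>"
    using lift_face c(2,4) by blast
  note d = d1 d2
  have dL: "d1 \<in> Lc" "d2 \<in> Lc"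
    using trop_lag_face_mem[OF tl] d by blast+
  have "d1 \<noteq> d2"
  proof
    assume "d1 = d2"
    then have "mu d1 \<ge> 2"
      using trop_lag_shared_face_weight[OF tl] d c \<open>\<sigma> \<in> Sig\<close> by metis
    then show False
      using ramification_codim2_weight_le1[OF ram dL(1)] d(2) dim by simp
  qed
  then obtain v where v: "v \<in> \<tau>" "pair (m d1) v \<noteq> pair (m d2) v"
    using sep \<tau>(1) dL d unfolding separable_n1_def by blast
  have "pair (m d1) v = pair (m c1) v" "pair (m d2) v = pair (m c2) v"
    using trop_lag_slope_face[OF tl] d v(1) by blast+
  then have "pair (m c1 - m c2) v \<noteq> 0"
    using v(2) by (simp add: pair_diff)
  then show ?thesis
    using v(1) unfolding perp_lat_def by blast
qed

lemma Nmat_vanishes_on_V_pts: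
  fixes Sig :: "(real^'n) set set"
  assumes tl: "trop_lag_multisection Sig Lc F P mu m r"
    and sep: "separable_n1 Sig Lc P m" and ram: "ramification_codim2 Lc P mu"
    and \<sigma>: "\<sigma> \<in> cones_dim Sig (int CARD('n))"
    and \<tau>: "\<tau> \<in> cones_dim Sig (int CARD('n) - 1)" "\<tau> face_of \<sigma>"
    and l: "lifts_of Lc P mu r \<sigma> l" and x: "x \<in> V_pts Sig \<tau>"
    and "\<alpha> < r" and "\<beta> < r"
  shows "Nmat F m l \<tau> nn \<omega> x \<alpha> \<beta> = 0"
proof (cases "\<alpha> \<noteq> \<beta> \<and> m (l \<alpha>) - m (l \<beta>) \<in> dual_lat \<tau>")
  case False
  then show ?thesis unfolding Nmat_def by auto
next
  case True
  have \<sigma>Sig: "\<sigma> \<in> Sig" and \<sigma>dim: "aff_dim \<sigma> = int CARD('n)"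
    using \<sigma> unfolding cones_dim_def by auto
  have lifts: "\<forall>\<gamma><r. l \<gamma> \<in> Lc \<and> P (l \<gamma>) = \<sigma>"
    using l unfolding lifts_of_def by blast
  have "\<forall>\<gamma><r. mu (l \<gamma>) \<le> 1"
    using ramification_codim2_weight_le1[OF ram] lifts \<sigma>dim by simp
  then have "l \<alpha> \<noteq> l \<beta>"
    using lifts_of_inj_on[OF l] True \<open>\<alpha> < r\<close> \<open>\<beta> < r\<close> by (auto dest: inj_onD)
  then have "m (l \<alpha>) - m (l \<beta>) \<notin> perp_lat \<tau>"
    using slope_diff_not_perp_facet[OF tl sep ram \<tau> \<sigma>Sig] lifts \<open>\<alpha> < r\<close> \<open>\<beta> < r\<close> by blast
  moreover have "convex \<tau>" and "aff_dim \<tau> \<le> int CARD('n) - 1"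
    using \<tau> face_of_imp_convex unfolding cones_dim_def by auto
  ultimately have "x (m (l \<alpha>) - m (l \<beta>)) = 0"
    using V_pts_nonzero_iff_perp[OF _ _ x] True by blast
  then show ?thesis unfolding Nmat_def by simp
qed

lemma Theta_eq_mid_on_V_pts:
  fixes Sig :: "(real^'n) set set"
  assumes "trop_lag_multisection Sig Lc F P mu m r"
    and "separable_n1 Sig Lc P m" and "ramification_codim2 Lc P mu"
    and "\<sigma> \<in> cones_dim Sig (int CARD('n))"
    and "\<tau> \<in> cones_dim Sig (int CARD('n) - 1)" "\<tau> face_of \<sigma>"
    and "lifts_of Lc P mu r \<sigma> l" and "x \<in> V_pts Sig \<tau>"
  shows "\<forall>i<r. \<forall>j<r. Theta r F m l \<tau> nn ws x i j = mid i j"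
  unfolding Theta_def
  by (rule foldr_mmul_mid) (auto intro!: mexp_zero Nmat_vanishes_on_V_pts[OF assms])

theorem theorem4p20:
  fixes Sig :: "(real^'n) set set" and Lc :: "'c set" and F :: "'c \<Rightarrow> 'c \<Rightarrow> bool"
    and P :: "'c \<Rightarrow> (real^'n) set" and mu :: "'c \<Rightarrow> nat" and m :: "'c \<Rightarrow> int^'n" and r :: nat
    and g :: "'c \<Rightarrow> 'c \<Rightarrow> complex"
    and \<sigma>1 \<sigma>2 :: "(real^'n) set" and l1 l2 :: "nat \<Rightarrow> 'c"
    and nn :: "'c \<Rightarrow> nat \<Rightarrow> nat \<Rightarrow> complex" and ws :: "'c list"
    and x :: "int^'n \<Rightarrow> complex"
  assumes "complete_fan Sig"
    and "trop_lag_multisection Sig Lc F P mu m r"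
    and "separable_n1 Sig Lc P m"
    and "ramification_codim2 Lc P mu"
    and "\<forall>c d. g c d \<noteq> 0"
    and "\<sigma>1 \<in> cones_dim Sig (int CARD('n))" and "\<sigma>2 \<in> cones_dim Sig (int CARD('n))"
    and "\<sigma>1 \<inter> \<sigma>2 \<in> cones_dim Sig (int CARD('n) - 1)"
    and "\<not> (\<sigma>1 \<inter> \<sigma>2 \<subseteq> S_set Lc P mu)"
    and "lifts_of Lc P mu r \<sigma>1 l1" and "lifts_of Lc P mu r \<sigma>2 l2"
    and "distinct ws" and "set ws = Sprime_tau F m r l1 (\<sigma>1 \<inter> \<sigma>2)"
    and "x \<in> V_pts Sig (\<sigma>1 \<inter> \<sigma>2)"
  shows "(\<forall>i<r. \<forall>j<r. Theta r F m l1 (\<sigma>1 \<inter> \<sigma>2) nn ws x i j = mid i j)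
       \<and> (\<forall>i<r. \<forall>j<r. mmul r (Gsf F P m g l1 l2 x) (Theta r F m l1 (\<sigma>1 \<inter> \<sigma>2) nn ws x) i j
                        = Gsf F P m g l1 l2 x i j)"
proof -
  \<comment> \<open>\<open>\<Theta>\<close> is the identity for every list of cones.\<close>
  have "\<sigma>1 \<in> Sig" "\<sigma>2 \<in> Sig"
    using assms(6,7) unfolding cones_dim_def by auto
  then have "\<sigma>1 \<inter> \<sigma>2 face_of \<sigma>1"
    using assms(1) unfolding complete_fan_def fan_def by blast
  then have "\<forall>i<r. \<forall>j<r. Theta r F m l1 (\<sigma>1 \<inter> \<sigma>2) nn ws x i j = mid i j"
    using Theta_eq_mid_on_V_pts assms(2-4,6,8,10,14) by blast
  then show ?thesis
    by (simp add: mmul_right_mid)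
qed

end
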